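(* Let $p,p'\ge 1$ be integers with $|p-p'|=1$, let $\alpha_{(p,p')}$ be the morphism $a\mapsto a^pb$, $b\mapsto a^{p'}b$, and let $Y$ be a finite word over $\{a,b\}$ such that $X=\alpha_{(p,p')}(Y)$ is a finite Sturmian word. Then: (i) $|K_{(X,a)}| = p|Y|_a + p'|Y|_b$; (ii) $|K_{(X,b)}| = |Y|$; (iii) $|K_{(X,aa)}| = (p-1)|Y|_a + (p'-1)|Y|_b$; (iv) $|K_X| = 2|X|-2|Y|$, and this equals $2|Y|_a+2p'|Y|$ when $p>p'$ and $2|Y|_b+2p|Y|$ when $p<p'$.
   Context: Words are over the alphabet $\{a,b\}$. A Sturmian word is a right-infinite aperiodic word over $\{a,b\}$ of minimal factor complexity (exactly $n+1$ distinct factors of each length $n$); a finite Sturmian word is a finite factor of some Sturmian word. $|X|$ is the length of $X$ and $|X|_l$ the number of occurrences of the letter $l$ in $X$; $X[i]$ is the letter at position $i$ and $X[i..j]$ the factor from position $i$ to $j$. A palindrome is a word equal to its reverse. Every palindrome has a center: its middle letter if its length is odd, its middle two letters if its length is even. For $c\in\{a,b,aa\}$, $K_{(X,c)}$ denotes the set of occurrences of $c$ in $X$, i.e. $\{(i,c): X[i..i+|c|-1]=c\}$; each such occurrence is regarded as the center of exactly one maximal palindrome occurrence (the longest palindromic factor of $X$ centered there), so $K_{(X,c)}$ is the set of maximal palindrome occurrences in $X$ with center $c$. $K_X=K_{(X,a)}\cup K_{(X,aa)}\cup K_{(X,b)}$. *)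

theory Defs
  imports Main
begin

datatype letter = a | b

type_synonym word = "letter list"

definition cnt :: "word \<Rightarrow> letter \<Rightarrow> nat" where
  "cnt X l = length (filter (\<lambda>x. x = l) X)"

definition factors_inf :: "(nat \<Rightarrow> letter) \<Rightarrow> nat \<Rightarrow> word set" where
  "factors_inf w n = {map w [i..<i+n] | i. True}"

definition eventually_periodic :: "(nat \<Rightarrow> letter) \<Rightarrow> bool" where
  "eventually_periodic w \<longleftrightarrow> (\<exists>q>0. \<exists>N. \<forall>i\<ge>N. w (i + q) = w i)"

definition sturmian :: "(nat \<Rightarrow> letter) \<Rightarrow> bool" where
  "sturmian w \<longleftrightarrow> \<not> eventually_periodic w \<and> (\<forall>n. card (factors_inf w n) = n + 1)"

definition finite_sturmian :: "word \<Rightarrow> bool" where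
  "finite_sturmian X \<longleftrightarrow> (\<exists>w. sturmian w \<and> (\<exists>i. X = map w [i..<i + length X]))"

definition alpha :: "nat \<Rightarrow> nat \<Rightarrow> word \<Rightarrow> word" where
  "alpha p p' Y = concat (map (\<lambda>l. case l of a \<Rightarrow> replicate p a @ [b] | b \<Rightarrow> replicate p' a @ [b]) Y)"

text \<open>K_(X,c): occurrences (i,c) of c in X, each the center of a maximal palindrome occurrence.\<close>
definition K :: "word \<Rightarrow> word \<Rightarrow> (nat \<times> word) set" where
  "K X c = {(i, c) | i. i + length c \<le> length X \<and> take (length c) (drop i X) = c}"

definition K_all :: "word \<Rightarrow> (nat \<times> word) set" where
  "K_all X = K X [a] \<union> K X [a, a] \<union> K X [b]"

end

theory Submission
  imports Defs
begin

text \<open>Each maximal palindrome occurrence is determined by its centre, so the sets \<open>K\<close> are in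
bijection with the occurrences of the letters \<open>a\<close>, \<open>b\<close> and of the factor \<open>aa\<close> in \<open>X\<close>. In \<open>X = \<alpha>(Y)\<close> every letter of \<open>Y\<close>
contributes one \<open>b\<close>, while a letter sent to \<open>a\<^sup>k b\<close> contributes \<open>k\<close> letters \<open>a\<close> and
\<open>k - 1\<close> factors \<open>aa\<close>, none of which straddles a block boundary since every block ends
with \<open>b\<close>.\<close>

definition occurrences :: "word \<Rightarrow> word \<Rightarrow> nat set" where
  "occurrences X c = {i. i + length c \<le> length X \<and> take (length c) (drop i X) = c}"

lemma finite_occurrences: "finite (occurrences X c)"
  by (rule finite_subset[of _ "{..length X}"]) (auto simp: occurrences_def)

lemma K_eq_image_occurrences: "K X c = (\<lambda>i. (i, c)) ` occurrences X c"
  unfolding K_def occurrences_def by auto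

lemma card_K: "card (K X c) = card (occurrences X c)"
  unfolding K_eq_image_occurrences by (rule card_image) (simp add: inj_on_def)

lemma finite_K: "finite (K X c)"
  unfolding K_eq_image_occurrences by (rule finite_imageI[OF finite_occurrences])

lemma card_occurrences_Nil: "c \<noteq> [] \<Longrightarrow> card (occurrences [] c) = 0"
  by (simp add: occurrences_def)

lemma occurrences_Cons:
  "occurrences (x # xs) c =
     (if length c \<le> Suc (length xs) \<and> take (length c) (x # xs) = c then {0} else {})
     \<union> Suc ` occurrences xs c"
  if "c \<noteq> []"
proof (rule set_eqI)
  fix i
  show "i \<in> occurrences (x # xs) c \<longleftrightarrow> i \<in> (if length c \<le> Suc (length xs)
      \<and> take (length c) (x # xs) = c then {0} else {}) \<union> Suc ` occurrences xs c"
    using that by (cases i) (auto simp: occurrences_def)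
qed

lemma card_occurrences_Cons:
  assumes "c \<noteq> []"
  shows "card (occurrences (x # xs) c) =
    (if length c \<le> Suc (length xs) \<and> take (length c) (x # xs) = c then 1 else 0)
    + card (occurrences xs c)"
proof -
  have "card (Suc ` occurrences xs c) = card (occurrences xs c)"
    by (rule card_image) simp
  moreover have "0 \<notin> Suc ` occurrences xs c" by auto
  ultimately show ?thesis
    using assms finite_occurrences[of xs c]
    by (simp add: occurrences_Cons card_insert_if)
qed

lemma card_occurrences_letter: "card (occurrences X [l]) = cnt X l"
  by (induction X) (auto simp: card_occurrences_Nil card_occurrences_Cons cnt_def)

lemma card_occurrences_square_replicate:
  assumes "y \<noteq> x"
  shows "card (occurrences (replicate n x @ y # v) [x, x]) = (n - 1) + card (occurrences v [x, x])"
proof (induction n)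
  case (Suc n)
  then show ?case
    using assms by (cases n) (simp_all add: card_occurrences_Cons)
qed (use assms in \<open>simp add: card_occurrences_Cons\<close>)

lemma card_K_all:
  "card (K_all X) = card (K X [a]) + card (K X [a, a]) + card (K X [b])"
proof -
  have "K X [a] \<inter> K X [a, a] = {}" "(K X [a] \<union> K X [a, a]) \<inter> K X [b] = {}"
    by (auto simp: K_def)
  then show ?thesis
    unfolding K_all_def by (simp add: card_Un_disjoint finite_K)
qed

lemma length_eq_cnt_a_plus_cnt_b: "length Y = cnt Y a + cnt Y b"
proof (induction Y)
  case (Cons y Y)
  then show ?case by (cases y) (auto simp: cnt_def)
qed (simp add: cnt_def)

lemma alpha_Nil [simp]: "alpha p p' [] = []"
  by (simp add: alpha_def)

lemma alpha_Cons_a [simp]: "alpha p p' (a # Y) = replicate p a @ b # alpha p p' Y"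
  by (simp add: alpha_def)

lemma alpha_Cons_b [simp]: "alpha p p' (b # Y) = replicate p' a @ b # alpha p p' Y"
  by (simp add: alpha_def)

lemma cnt_alpha_a: "cnt (alpha p p' Y) a = p * cnt Y a + p' * cnt Y b"
proof (induction Y)
  case (Cons y Y)
  then show ?case by (cases y) (simp_all add: cnt_def)
qed (simp add: cnt_def)

lemma cnt_alpha_b: "cnt (alpha p p' Y) b = length Y"
proof (induction Y)
  case (Cons y Y)
  then show ?case by (cases y) (simp_all add: cnt_def)
qed (simp add: cnt_def)

lemma length_alpha: "length (alpha p p' Y) = (p + 1) * cnt Y a + (p' + 1) * cnt Y b"
proof (induction Y)
  case (Cons y Y)
  then show ?case by (cases y) (simp_all add: cnt_def)
qed (simp add: cnt_def)

lemma card_occurrences_aa_alpha: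
  "card (occurrences (alpha p p' Y) [a, a]) = (p - 1) * cnt Y a + (p' - 1) * cnt Y b"
proof (induction Y)
  case (Cons y Y)
  then show ?case
    by (cases y) (simp_all add: card_occurrences_square_replicate cnt_def)
qed (simp add: card_occurrences_Nil cnt_def)

theorem theorem1:
  fixes p p' :: nat and Y X :: word
  assumes "p \<ge> 1" and "p' \<ge> 1" and "p = p' + 1 \<or> p' = p + 1"
    and "X = alpha p p' Y" and "finite_sturmian X"
  shows "card (K X [a]) = p * cnt Y a + p' * cnt Y b
    \<and> card (K X [b]) = length Y
    \<and> card (K X [a, a]) = (p - 1) * cnt Y a + (p' - 1) * cnt Y b
    \<and> int (card (K_all X)) = 2 * int (length X) - 2 * int (length Y)
    \<and> (p > p' \<longrightarrow> card (K_all X) = 2 * cnt Y a + 2 * p' * length Y)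
    \<and> (p < p' \<longrightarrow> card (K_all X) = 2 * cnt Y b + 2 * p * length Y)"
proof -
  have Ka: "card (K X [a]) = p * cnt Y a + p' * cnt Y b"
    using assms(4) by (simp add: card_K card_occurrences_letter cnt_alpha_a)
  have Kb: "card (K X [b]) = length Y"
    using assms(4) by (simp add: card_K card_occurrences_letter cnt_alpha_b)
  have Kaa: "card (K X [a, a]) = (p - 1) * cnt Y a + (p' - 1) * cnt Y b"
    using assms(4) by (simp add: card_K card_occurrences_aa_alpha)
  obtain q q' where "p = Suc q" "p' = Suc q'"
    using assms(1,2) by (metis Suc_le_D One_nat_def)
  then have Kall: "card (K_all X) = 2 * p * cnt Y a + 2 * p' * cnt Y b"
    using Ka Kb Kaa by (simp add: card_K_all length_eq_cnt_a_plus_cnt_b)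
  have "length X = (p + 1) * cnt Y a + (p' + 1) * cnt Y b"
    using assms(4) by (simp add: length_alpha)
  then have "int (card (K_all X)) = 2 * int (length X) - 2 * int (length Y)"
    by (simp add: Kall length_eq_cnt_a_plus_cnt_b algebra_simps)
  moreover have "p > p' \<longrightarrow> card (K_all X) = 2 * cnt Y a + 2 * p' * length Y"
    using assms(3) by (auto simp: Kall length_eq_cnt_a_plus_cnt_b algebra_simps)
  moreover have "p < p' \<longrightarrow> card (K_all X) = 2 * cnt Y b + 2 * p * length Y"
    using assms(3) by (auto simp: Kall length_eq_cnt_a_plus_cnt_b algebra_simps)
  ultimately show ?thesis
    using Ka Kb Kaa by blast
qed

end
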